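(* Let $X_n(d_1,\dots,d_r)\subset\mathbb{C}P^{n+r}$ be a complete intersection with $r>1$, $d_1,\dots,d_r>1$ and $c_1=n+r+1-\sum_{i=1}^r d_i<0$. For $1\leqslant j\leqslant r$ set $c_1^{(n,\hat j)}=n+(r-1)+1-\sum_{i=1}^r d_i+d_j$. If $c_1^{(n,\hat j)}\geqslant 0$ for every $1\leqslant j\leqslant r$, then $(-1)^n{\rm Td}(X_n(d_1,\dots,d_r))\geqslant n+r$.
   Context: A complete intersection $X_n(d_1,\dots,d_r)\subset\mathbb{C}P^{n+r}$ is a compact complex $n$-dimensional manifold given as the transversal intersection of $r$ nonsingular hypersurfaces of degrees $d_1,\dots,d_r$. The Todd genus of a compact complex $n$-manifold $M$ with formal Chern roots $x_1,\dots,x_n$ is ${\rm Td}(M)=\big(\prod_i\frac{x_i}{1-e^{-x_i}}\big)[M]$. *)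

theory Defs
  imports "HOL-Computational_Algebra.Formal_Power_Series"
begin

text \<open>Formal power series in the hyperplane class x of CP^{n+r}.
  ehat d = (1 - e^{-d x})/(d x) = sum_k (-d)^k x^k/(k+1)!.
  The Todd power series is x/(1 - e^{-x}) = inverse (ehat 1).\<close>

definition ehat :: "real \<Rightarrow> real fps" where
  "ehat d = Abs_fps (\<lambda>k. (- d) ^ k / fact (k + 1))"

definition todd_series :: "real fps" where
  "todd_series = inverse (ehat 1)"

text \<open>Todd genus of the complete intersection X_n(d_1,...,d_r) in CP^{n+r}.
  Its tangent bundle satisfies T X + (O(d_1) + ... + O(d_r))|_X = (n+r+1) O(1)|_X,
  so by multiplicativity the Todd class is
  (x/(1-e^{-x}))^{n+r+1} * prod_i (1-e^{-d_i x})/(d_i x) ... written as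
  todd_series^(n+r+1) * prod_i (d_i x/(1-e^{-d_i x}))^{-1},
  and evaluating on the fundamental class [X] = (d_1 ... d_r) x^n \<inter> [CP^{n+r}]
  picks the coefficient of x^n times the degree d_1 ... d_r.\<close>

definition todd_ci :: "nat \<Rightarrow> nat list \<Rightarrow> real" where
  "todd_ci n ds =
     (\<Prod>d\<leftarrow>ds. real d) *
     fps_nth (todd_series ^ (n + length ds + 1) * (\<Prod>d\<leftarrow>ds. ehat (real d))) n"

end

(*
  Write E = 1 - e^(-x), so that the Todd series is T = x/E and 1 - e^(-d x) = 1 - (1 - E)^d.
  With N = n + r, Td(X) is then the coefficient of x^N in T^(N+1) * prod_i (1 - (1 - E)^(d_i)).
  The residue identity [x^(m-1)] T^m = 1, obtained from the Riccati equation
  x T' = T - T^2 + x T, gives [x^N] T^(N+1) E^k = [k <= N], and binomial expansion of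
  e^(-s x) = (1 - E)^s turns this into [x^N] T^(N+1) e^(-s x) = (-1)^N binom(s - 1, N),
  which vanishes for 0 < s <= N. Expanding the product over subsets S of the degrees, the
  hypotheses force the degree sum of every proper nonempty S into (0, N], so only the empty
  set and the full set survive: Td(X) = 1 + (-1)^n binom(d_1 + ... + d_r - 1, N), and
  binom(d_1 + ... + d_r - 1, N) >= N + 1 because d_1 + ... + d_r >= N + 2.
*)

theory Submission
  imports Defs
begin

lemma fps_nth_X_times_deriv:
  fixes G :: "'a::comm_ring_1 fps"
  shows "fps_nth (fps_X * fps_deriv G) k = of_nat k * fps_nth G k"
  by (cases k) simp_all

lemma sum_alternating_choose_Suc:
  "(\<Sum>k\<le>N. (-1) ^ k * real (Suc p choose k)) = (-1) ^ N * real (p choose N)"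
  by (induction N) (simp_all add: algebra_simps)

lemma prod_list_one_minus_power:
  fixes y :: "'a::comm_ring_1"
  shows "(\<Prod>d\<leftarrow>ds. 1 - y ^ d) = (\<Sum>S\<in>Pow {..<length ds}. (-1) ^ card S * y ^ (\<Sum>i\<in>S. ds ! i))"
  by (simp add: prod.list_conv_set_nth atLeast0LessThan prod_diff_conv_sum power_sum)

definition one_minus_exp_neg :: "real fps" where
  "one_minus_exp_neg = 1 - fps_exp (-1)"

lemma X_times_ehat: "fps_const c * fps_X * ehat c = 1 - fps_exp (- c)"
proof (rule fps_ext)
  fix k
  show "fps_nth (fps_const c * fps_X * ehat c) k = fps_nth (1 - fps_exp (- c)) k"
    by (cases k) (simp_all add: ehat_def fps_exp_def field_simps)
qed

lemma X_times_ehat_of_nat: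
  "fps_const (real d) * fps_X * ehat (real d) = 1 - (1 - one_minus_exp_neg) ^ d"
  by (simp add: X_times_ehat one_minus_exp_neg_def fps_exp_power_mult)

lemma todd_series_times_one_minus_exp_neg: "todd_series * one_minus_exp_neg = fps_X"
proof -
  have "one_minus_exp_neg = fps_X * ehat 1"
    using X_times_ehat[of 1] by (simp add: one_minus_exp_neg_def)
  then have "todd_series * one_minus_exp_neg = fps_X * (inverse (ehat 1) * ehat 1)"
    by (simp add: todd_series_def algebra_simps)
  also have "inverse (ehat 1) * ehat 1 = 1"
    by (rule inverse_mult_eq_1) (simp add: ehat_def)
  finally show ?thesis by simp
qed

lemma fps_deriv_one_minus_exp_neg: "fps_deriv one_minus_exp_neg = 1 - one_minus_exp_neg"
  by (simp add: one_minus_exp_neg_def flip: fps_const_neg)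

lemma todd_series_ode:
  "fps_X * fps_deriv todd_series = todd_series - todd_series ^ 2 + fps_X * todd_series"
proof -
  let ?T = todd_series and ?E = one_minus_exp_neg
  have deriv: "fps_deriv ?T * ?E = 1 - ?T * (1 - ?E)"
    using arg_cong[OF todd_series_times_one_minus_exp_neg, of fps_deriv]
    by (simp add: fps_deriv_one_minus_exp_neg algebra_simps)
  have "?E * (fps_X * fps_deriv ?T) = ?E * (?T - ?T ^ 2 + fps_X * ?T)"
  proof -
    have "?E * (fps_X * fps_deriv ?T) = fps_X * (1 - ?T * (1 - ?E))"
      by (simp flip: deriv add: ac_simps)
    also have "\<dots> = ?E * ?T - (?E * ?T) * ?T + fps_X * (?E * ?T)"
      using todd_series_times_one_minus_exp_neg by (simp add: algebra_simps)
    also have "\<dots> = ?E * (?T - ?T ^ 2 + fps_X * ?T)"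
      by (simp add: algebra_simps power2_eq_square)
    finally show ?thesis .
  qed
  moreover have "fps_nth ?E 1 = 1"
    by (simp add: one_minus_exp_neg_def fps_exp_def)
  then have "?E \<noteq> 0"
    by auto
  ultimately show ?thesis by simp
qed

lemma fps_nth_todd_series_power_Suc:
  assumes "m > 0"
  shows "fps_nth (todd_series ^ Suc m) m = fps_nth (todd_series ^ m) (m - 1)"
proof -
  let ?T = todd_series
  obtain j where m: "m = Suc j"
    using assms by (cases m) auto
  have "fps_X * fps_deriv (?T ^ m) = of_nat m * ?T ^ j * (fps_X * fps_deriv ?T)"
    by (simp only: m fps_deriv_power' diff_Suc_1) (simp add: ac_simps)
  also have "\<dots> = fps_const (real m) * (?T ^ m - ?T ^ Suc m + fps_X * ?T ^ m)"
    by (simp add: todd_series_ode m algebra_simps power2_eq_square flip: fps_of_nat)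
  finally have ode_power: "fps_X * fps_deriv (?T ^ m)
      = fps_const (real m) * (?T ^ m - ?T ^ Suc m + fps_X * ?T ^ m)" .
  have "real m * fps_nth (?T ^ m) m = fps_nth (fps_X * fps_deriv (?T ^ m)) m"
    by (simp add: fps_nth_X_times_deriv)
  also have "\<dots> = real m * (fps_nth (?T ^ m) m - fps_nth (?T ^ Suc m) m + fps_nth (?T ^ m) (m - 1))"
    unfolding ode_power using assms by (simp del: power_Suc)
  finally show ?thesis
    using assms by simp
qed

lemma fps_nth_todd_series_power:
  assumes "m > 0"
  shows "fps_nth (todd_series ^ m) (m - 1) = 1"
  using assms
proof (induction m rule: nat_induct_non_zero)
  case 1
  then show ?case by (simp add: todd_series_def ehat_def)
next
  case (Suc m)
  then show ?case by (simp add: fps_nth_todd_series_power_Suc del: power_Suc)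
qed

lemma todd_series_power_times_one_minus_exp_neg_power:
  assumes "j \<le> m"
  shows "todd_series ^ m * one_minus_exp_neg ^ j = fps_X ^ j * todd_series ^ (m - j)"
proof -
  have "todd_series ^ m = todd_series ^ (m - j) * todd_series ^ j"
    using assms by (simp flip: power_add)
  then show ?thesis
    by (simp add: ac_simps flip: power_mult_distrib todd_series_times_one_minus_exp_neg)
qed

lemma fps_nth_todd_series_power_times_one_minus_exp_neg_power:
  "fps_nth (todd_series ^ (N + 1) * one_minus_exp_neg ^ k) N = (if k \<le> N then 1 else 0)"
proof (cases "k \<le> N")
  case True
  then have "fps_nth (todd_series ^ (N + 1) * one_minus_exp_neg ^ k) N
      = fps_nth (fps_X ^ k * todd_series ^ (N + 1 - k)) N"
    by (subst todd_series_power_times_one_minus_exp_neg_power) simp_all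
  also have "\<dots> = fps_nth (todd_series ^ (N + 1 - k)) (N + 1 - k - 1)"
    using True by (simp add: fps_X_power_mult_nth)
  also have "\<dots> = 1"
    using True by (intro fps_nth_todd_series_power) simp
  finally show ?thesis
    using True by simp
next
  case False
  then have "one_minus_exp_neg ^ k = one_minus_exp_neg ^ (N + 1) * one_minus_exp_neg ^ (k - (N + 1))"
    by (simp del: power_Suc flip: power_add)
  then have "todd_series ^ (N + 1) * one_minus_exp_neg ^ k
      = (todd_series * one_minus_exp_neg) ^ (N + 1) * one_minus_exp_neg ^ (k - (N + 1))"
    by (simp only: power_mult_distrib mult.assoc)
  then show ?thesis
    using False by (simp add: todd_series_times_one_minus_exp_neg fps_X_power_mult_nth del: power_Suc)
qed

lemma fps_nth_todd_series_power_times_exp_neg_power: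
  "fps_nth (todd_series ^ (N + 1) * (1 - one_minus_exp_neg) ^ Suc p) N = (-1) ^ N * real (p choose N)"
proof -
  let ?T = todd_series and ?E = one_minus_exp_neg
  define c where "c k = (-1) ^ k * real (Suc p choose k)" for k
  have "(1 - ?E) ^ Suc p = (- ?E + 1) ^ Suc p"
    by (simp only: diff_conv_add_uminus add.commute)
  also have "\<dots> = (\<Sum>k\<le>Suc p. of_nat (Suc p choose k) * (- ?E) ^ k)"
    by (simp only: binomial_ring power_one mult_1_right)
  also have "\<dots> = (\<Sum>k\<le>Suc p. fps_const (c k) * ?E ^ k)"
  proof (intro sum.cong refl)
    fix k
    have "fps_const (c k) = (- 1) ^ k * of_nat (Suc p choose k)"
      by (simp add: c_def fps_of_nat flip: fps_const_power fps_const_neg fps_const_mult)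
    then show "of_nat (Suc p choose k) * (- ?E) ^ k = fps_const (c k) * ?E ^ k"
      by (simp only: power_minus[of ?E] mult_ac)
  qed
  finally have "fps_nth (?T ^ (N + 1) * (1 - ?E) ^ Suc p) N
      = (\<Sum>k\<le>Suc p. c k * fps_nth (?T ^ (N + 1) * ?E ^ k) N)"
    by (simp only: sum_distrib_left fps_sum_nth mult.left_commute[of "?T ^ (N + 1)"] fps_mult_left_const_nth)
  also have "\<dots> = (\<Sum>k\<le>Suc p. if k \<le> N then c k else 0)"
    by (intro sum.cong refl) (simp only: fps_nth_todd_series_power_times_one_minus_exp_neg_power, simp)
  also have "\<dots> = (\<Sum>k\<in>{k\<in>{..Suc p}. k \<le> N}. c k)"
    by (simp only: sum.inter_filter finite_atMost)
  also have "\<dots> = (\<Sum>k\<le>N. c k)"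
    by (rule sum.mono_neutral_left) (auto simp: c_def)
  finally show ?thesis
    by (simp add: c_def sum_alternating_choose_Suc)
qed

lemma prod_list_X_times_ehat:
  "fps_X ^ length ds * fps_const (\<Prod>d\<leftarrow>ds. real d) * (\<Prod>d\<leftarrow>ds. ehat (real d))
     = (\<Prod>d\<leftarrow>ds. 1 - (1 - one_minus_exp_neg) ^ d)"
proof (induction ds)
  case Nil
  then show ?case by simp
next
  case (Cons d ds)
  have "fps_X ^ length (d # ds) * fps_const (\<Prod>d\<leftarrow>d # ds. real d) * (\<Prod>d\<leftarrow>d # ds. ehat (real d))
      = (fps_const (real d) * fps_X * ehat (real d)) *
        (fps_X ^ length ds * fps_const (\<Prod>d\<leftarrow>ds. real d) * (\<Prod>d\<leftarrow>ds. ehat (real d)))"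
    by (simp add: ac_simps flip: fps_const_mult)
  then show ?case
    by (simp add: Cons.IH X_times_ehat_of_nat)
qed

lemma todd_ci_eq_fps_nth:
  "todd_ci n ds = fps_nth (todd_series ^ (n + length ds + 1)
      * (\<Prod>d\<leftarrow>ds. 1 - (1 - one_minus_exp_neg) ^ d)) (n + length ds)"
proof -
  let ?G = "todd_series ^ (n + length ds + 1)" and ?P = "\<Prod>d\<leftarrow>ds. real d"
    and ?Q = "\<Prod>d\<leftarrow>ds. ehat (real d)"
  have "todd_ci n ds = fps_nth (fps_X ^ length ds * (fps_const ?P * (?G * ?Q))) (n + length ds)"
    by (simp add: todd_ci_def fps_X_power_mult_nth)
  also have "fps_X ^ length ds * (fps_const ?P * (?G * ?Q)) = ?G * (fps_X ^ length ds * fps_const ?P * ?Q)"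
    by (simp add: ac_simps)
  finally show ?thesis
    by (simp only: prod_list_X_times_ehat)
qed

lemma fps_nth_todd_series_power_times_exp_neg_power_eq_0:
  assumes "0 < s" and "s \<le> N"
  shows "fps_nth (todd_series ^ (N + 1) * (1 - one_minus_exp_neg) ^ s) N = 0"
proof -
  obtain p where "s = Suc p" and "p < N"
    using assms by (cases s) auto
  then show ?thesis
    by (simp only: fps_nth_todd_series_power_times_exp_neg_power) simp
qed

lemma todd_ci_closed_form:
  assumes pos: "\<forall>d\<in>set ds. d > 0"
    and sum_gt: "n + length ds < sum_list ds"
    and sum_le: "\<forall>j<length ds. sum_list ds \<le> n + length ds + ds ! j"
  shows "todd_ci n ds = 1 + (-1) ^ n * real (sum_list ds - 1 choose (n + length ds))"
proof -
  define N where "N = n + length ds"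
  define I where "I = {..<length ds}"
  define w where "w S = (\<Sum>i\<in>S. ds ! i)" for S
  define h where "h S = (-1) ^ card S * fps_nth (todd_series ^ (N + 1) * (1 - one_minus_exp_neg) ^ w S) N"
    for S
  have "I \<noteq> {}"
    using sum_gt by (cases ds) (auto simp: I_def)
  have w_I: "w I = sum_list ds"
    by (simp add: w_def I_def sum_list_sum_nth atLeast0LessThan)
  have neg_one_power: "(-1 :: real fps) ^ k = fps_const ((-1) ^ k)" for k
    by (simp flip: fps_const_neg fps_const_power)
  have "todd_ci n ds = fps_nth (todd_series ^ (N + 1)
      * (\<Sum>S\<in>Pow I. (-1) ^ card S * (1 - one_minus_exp_neg) ^ w S)) N"
    unfolding todd_ci_eq_fps_nth prod_list_one_minus_power N_def I_def w_def ..
  also have "\<dots> = (\<Sum>S\<in>Pow I. h S)"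
    by (simp only: sum_distrib_left fps_sum_nth neg_one_power mult.left_commute[of "todd_series ^ (N + 1)"]
        fps_mult_left_const_nth h_def)
  also have "\<dots> = (\<Sum>S\<in>{{}, I}. h S)"
  proof (rule sum.mono_neutral_right)
    show "\<forall>S\<in>Pow I - {{}, I}. h S = 0"
    proof
      fix S assume "S \<in> Pow I - {{}, I}"
      then obtain i j where "i \<in> S" "j \<in> I - S" "S \<subseteq> I"
        by blast
      moreover have "finite S"
        using \<open>S \<subseteq> I\<close> by (simp add: I_def finite_subset)
      ultimately have "ds ! i \<le> w S" and "w S + ds ! j = w (insert j S)"
        by (simp_all add: w_def member_le_sum)
      moreover have "w (insert j S) \<le> w I"
        unfolding w_def using \<open>S \<subseteq> I\<close> \<open>j \<in> I - S\<close> by (intro sum_mono2) (auto simp: I_def)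
      moreover have "0 < ds ! i" and "sum_list ds \<le> N + ds ! j"
        using pos sum_le \<open>i \<in> S\<close> \<open>j \<in> I - S\<close> \<open>S \<subseteq> I\<close> by (auto simp: I_def N_def)
      ultimately have "0 < w S" and "w S \<le> N"
        using w_I by linarith+
      then show "h S = 0"
        using fps_nth_todd_series_power_times_exp_neg_power_eq_0[of "w S" N] by (simp add: h_def)
    qed
  qed (auto simp: I_def)
  also have "\<dots> = h {} + h I"
    using \<open>I \<noteq> {}\<close> by simp
  also have "h {} = 1"
    using fps_nth_todd_series_power_times_one_minus_exp_neg_power[of N 0] by (simp add: h_def w_def)
  also have "h I = (-1) ^ n * real (sum_list ds - 1 choose N)"
  proof -
    have "w I = Suc (sum_list ds - 1)"
      using w_I sum_gt by simp
    then have "h I = (-1) ^ (length ds + N) * real (sum_list ds - 1 choose N)"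
      by (simp only: h_def fps_nth_todd_series_power_times_exp_neg_power) (simp add: I_def power_add)
    also have "(-1::real) ^ (length ds + N) = (-1) ^ n"
      by (simp add: N_def power_add flip: power_mult power2_eq_square)
    finally show ?thesis .
  qed
  finally show ?thesis
    by (simp add: N_def)
qed

theorem lemma3p3:
  fixes n :: nat and ds :: "nat list"
  assumes "length ds > 1"
    and "\<forall>d\<in>set ds. d > 1"
    and "int n + int (length ds) + 1 - int (sum_list ds) < 0"
    and "\<forall>j<length ds. int n + (int (length ds) - 1) + 1 - int (sum_list ds) + int (ds ! j) \<ge> 0"
  shows "(-1) ^ n * todd_ci n ds \<ge> real (n + length ds)"
proof -
  let ?N = "n + length ds" and ?D = "sum_list ds"
  have closed_form: "todd_ci n ds = 1 + (-1) ^ n * real (?D - 1 choose ?N)"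
    using assms(2-4) by (intro todd_ci_closed_form) auto
  have "Suc ?N choose ?N \<le> ?D - 1 choose ?N"
    using assms(3) by (intro binomial_right_mono) linarith
  then have "real ?N + 1 \<le> real (?D - 1 choose ?N)"
    by (simp add: binomial_Suc_n)
  moreover have "(-1) ^ n * todd_ci n ds = (-1) ^ n + real (?D - 1 choose ?N)"
    by (simp add: closed_form algebra_simps flip: power_add)
  moreover have "(-1 :: real) ^ n \<ge> -1"
    by (cases "even n") simp_all
  ultimately show ?thesis
    by linarith
qed

end
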